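(* Let $X_1,\dots,X_n$ be i.i.d. $\mathsf{Bernoulli}(p)$ with $p\in[\frac12,1)$, and let $Y_k=X_k\oplus V_k$ for $k=1,\dots,n$, where $V_1,\dots,V_n$ are i.i.d. $\mathsf{Bernoulli}(\alpha)$, independent of $X^n$, with $\alpha\in[0,\frac12)$ and $\bar\alpha>p$. Let $q=\alpha\bar p+\bar\alpha p$ and $\zeta(\varepsilon)=\frac{\bar\alpha\bar p+\bar\alpha p-\varepsilon}{\bar\alpha p-\alpha\bar p}$. Then for all $\varepsilon\in[p,\bar\alpha]$, $$\mathcal{h}^{\mathsf i}_n(\varepsilon)=1-\zeta(\varepsilon)q.$$
   Context: $\bar a=1-a$; $\oplus$ is addition mod 2. $\mathsf{P}_{\mathsf{c}}(X^n|Z^n)=\sum_{z^n}\max_{x^n}P_{X^nZ^n}(x^n,z^n)$. $\mathcal{h}^{\mathsf i}_n(\varepsilon)=\sup\mathsf{P}_{\mathsf{c}}^{1/n}(Y^n|Z^n)$, where the supremum is over all memoryless privacy filters of the form $P_{Z^n|Y^n}(z^n|y^n)=\prod_{k=1}^n\mathsf{W}(z_k|y_k)$ for $y^n,z^n\in\{0,1\}^n$, with $\mathsf{W}$ a single channel from $\{0,1\}$ to $\{0,1\}$ (with $Z^n$ generated from $Y^n$ only, so $X^n - Y^n - Z^n$), satisfying $\mathsf{P}_{\mathsf{c}}^{1/n}(X^n|Z^n)\le\varepsilon$. *)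

theory Defs
  imports Complex_Main
begin

text \<open>Binary strings of length n are bool lists (True = 1). Bernoulli pmf.\<close>
definition bern :: "real \<Rightarrow> bool \<Rightarrow> real" where
  "bern p b = (if b then p else 1 - p)"

definition strings :: "nat \<Rightarrow> bool list set" where
  "strings n = {xs. length xs = n}"

definition PXY :: "real \<Rightarrow> real \<Rightarrow> bool \<Rightarrow> bool \<Rightarrow> real" where
  "PXY p \<alpha> x y = bern p x * bern \<alpha> (x \<noteq> y)"

definition PXYn :: "real \<Rightarrow> real \<Rightarrow> bool list \<Rightarrow> bool list \<Rightarrow> real" where
  "PXYn p \<alpha> xs ys = (\<Prod>k<length xs. PXY p \<alpha> (xs ! k) (ys ! k))"

text \<open>A channel W from {0,1} to {0,1}: W y z = W(z|y).\<close>
definition channel :: "(bool \<Rightarrow> bool \<Rightarrow> real) \<Rightarrow> bool" where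
  "channel W \<longleftrightarrow> (\<forall>y z. 0 \<le> W y z) \<and> (\<forall>y. W y True + W y False = 1)"

definition Wn :: "(bool \<Rightarrow> bool \<Rightarrow> real) \<Rightarrow> bool list \<Rightarrow> bool list \<Rightarrow> real" where
  "Wn W ys zs = (\<Prod>k<length ys. W (ys ! k) (zs ! k))"

definition PXZn :: "real \<Rightarrow> real \<Rightarrow> (bool \<Rightarrow> bool \<Rightarrow> real) \<Rightarrow> nat \<Rightarrow> bool list \<Rightarrow> bool list \<Rightarrow> real" where
  "PXZn p \<alpha> W n xs zs = (\<Sum>ys\<in>strings n. PXYn p \<alpha> xs ys * Wn W ys zs)"

definition PYZn :: "real \<Rightarrow> real \<Rightarrow> (bool \<Rightarrow> bool \<Rightarrow> real) \<Rightarrow> nat \<Rightarrow> bool list \<Rightarrow> bool list \<Rightarrow> real" where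
  "PYZn p \<alpha> W n ys zs = (\<Sum>xs\<in>strings n. PXYn p \<alpha> xs ys * Wn W ys zs)"

definition Pc :: "nat \<Rightarrow> (bool list \<Rightarrow> bool list \<Rightarrow> real) \<Rightarrow> real" where
  "Pc n P = (\<Sum>zs\<in>strings n. Max ((\<lambda>xs. P xs zs) ` strings n))"

definition hi :: "nat \<Rightarrow> real \<Rightarrow> real \<Rightarrow> real \<Rightarrow> real" where
  "hi n p \<alpha> \<epsilon> = Sup {Pc n (PYZn p \<alpha> W n) powr (1 / real n) | W.
      channel W \<and> Pc n (PXZn p \<alpha> W n) powr (1 / real n) \<le> \<epsilon>}"

end

theory Submission imports Defs begin

text \<open>Source and filter are memoryless, so both joint pmfs factorize over the letters
and the correct-guessing probability of a product pmf is the \<open>n\<close>-th power of its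
single-letter value: \<open>hi\<close> is a single-letter optimization over binary channels \<open>W\<close>.
Any rule guessing a letter from \<open>Z\<close> succeeds for \<open>X\<close> and for \<open>Y\<close> with probabilities
\<open>P\<^sub>X\<close>, \<open>P\<^sub>Y\<close> satisfying \<open>q P\<^sub>X \<ge> q (1 - \<alpha>) - (1 - P\<^sub>Y) (p - \<alpha>)\<close>; with \<open>P\<^sub>X \<le> \<epsilon>\<close>
this is the converse. The Z-channel flipping a \<open>1\<close> to \<open>0\<close> with probability \<open>\<zeta>(\<epsilon>)\<close>
meets the privacy constraint with equality and attains the bound.\<close>

lemma finite_strings: "finite (strings n)"
proof -
  have "strings n = {xs. set xs \<subseteq> (UNIV :: bool set) \<and> length xs = n}"
    by (auto simp: strings_def)
  then show ?thesis
    using finite_lists_length_eq[of "UNIV :: bool set" n] by simp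
qed

lemma strings_Suc: "strings (Suc n) = Cons True ` strings n \<union> Cons False ` strings n"
  by (auto simp: strings_def length_Suc_conv)

lemma sum_Cons_strings:
  "(\<Sum>ys\<in>Cons b ` strings n. f ys) = (\<Sum>ys\<in>strings n. f (b # ys))"
  by (subst sum.reindex) (auto simp: inj_on_def)

lemma sum_strings_prod:
  fixes F :: "nat \<Rightarrow> bool \<Rightarrow> 'a :: comm_semiring_1"
  shows "(\<Sum>ys\<in>strings n. \<Prod>k<n. F k (ys ! k)) = (\<Prod>k<n. F k True + F k False)"
proof (induction n arbitrary: F)
  case 0
  then show ?case by (simp add: strings_def)
next
  case (Suc n)
  have Cons_part: "(\<Sum>ys\<in>Cons b ` strings n. \<Prod>k<Suc n. F k (ys ! k))
      = F 0 b * (\<Prod>k<n. F (Suc k) True + F (Suc k) False)" for b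
  proof -
    have "(\<Sum>ys\<in>Cons b ` strings n. \<Prod>k<Suc n. F k (ys ! k))
        = (\<Sum>ys\<in>strings n. F 0 b * (\<Prod>k<n. F (Suc k) (ys ! k)))"
      by (simp only: sum_Cons_strings prod.lessThan_Suc_shift nth_Cons_0 nth_Cons_Suc)
    then show ?thesis
      by (simp add: sum_distrib_left[symmetric] Suc.IH[of "\<lambda>k. F (Suc k)"])
  qed
  have "(\<Sum>ys\<in>strings (Suc n). \<Prod>k<Suc n. F k (ys ! k))
      = (\<Sum>ys\<in>Cons True ` strings n. \<Prod>k<Suc n. F k (ys ! k))
        + (\<Sum>ys\<in>Cons False ` strings n. \<Prod>k<Suc n. F k (ys ! k))"
    unfolding strings_Suc by (rule sum.union_disjoint) (auto simp: finite_strings)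
  also have "\<dots> = (F 0 True + F 0 False) * (\<Prod>k<n. F (Suc k) True + F (Suc k) False)"
    by (simp only: Cons_part distrib_right)
  also have "\<dots> = (\<Prod>k<Suc n. F k True + F k False)"
    by (simp only: prod.lessThan_Suc_shift)
  finally show ?case .
qed

lemma Max_strings_prod:
  fixes F :: "nat \<Rightarrow> bool \<Rightarrow> 'a :: linordered_semidom"
  assumes "\<And>k b. 0 \<le> F k b"
  shows "Max ((\<lambda>xs. \<Prod>k<n. F k (xs ! k)) ` strings n) = (\<Prod>k<n. max (F k True) (F k False))"
proof (rule Max_eqI)
  show "finite ((\<lambda>xs. \<Prod>k<n. F k (xs ! k)) ` strings n)"
    by (simp add: finite_strings)
next
  fix y assume "y \<in> (\<lambda>xs. \<Prod>k<n. F k (xs ! k)) ` strings n"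
  then obtain xs where y: "y = (\<Prod>k<n. F k (xs ! k))" by auto
  have "F k (xs ! k) \<le> max (F k True) (F k False)" for k
    by (cases "xs ! k") auto
  then show "y \<le> (\<Prod>k<n. max (F k True) (F k False))"
    unfolding y by (intro prod_mono conjI assms)
next
  define best where "best = map (\<lambda>k. F k False \<le> F k True) [0..<n]"
  have "best \<in> strings n" by (simp add: best_def strings_def)
  moreover have "(\<Prod>k<n. max (F k True) (F k False)) = (\<Prod>k<n. F k (best ! k))"
  proof (rule prod.cong[OF refl])
    fix k assume "k \<in> {..<n}"
    then show "max (F k True) (F k False) = F k (best ! k)"
      by (cases "F k False \<le> F k True") (auto simp: best_def max_def)
  qed
  ultimately show "(\<Prod>k<n. max (F k True) (F k False)) \<in> (\<lambda>xs. \<Prod>k<n. F k (xs ! k)) ` strings n"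
    by (rule rev_image_eqI)
qed

definition Pc1 :: "(bool \<Rightarrow> bool \<Rightarrow> real) \<Rightarrow> real" where
  "Pc1 g = max (g True True) (g False True) + max (g True False) (g False False)"

lemma Pc1_nonneg: "(\<And>x z. 0 \<le> g x z) \<Longrightarrow> 0 \<le> Pc1 g"
  unfolding Pc1_def by (meson add_nonneg_nonneg max.coboundedI1)

lemma Pc_product:
  fixes g :: "bool \<Rightarrow> bool \<Rightarrow> real"
  assumes g_nonneg: "\<And>x z. 0 \<le> g x z"
    and P: "\<And>xs zs. xs \<in> strings n \<Longrightarrow> zs \<in> strings n \<Longrightarrow> P xs zs = (\<Prod>k<n. g (xs ! k) (zs ! k))"
  shows "Pc n P = Pc1 g ^ n"
proof -
  have "Pc n P = (\<Sum>zs\<in>strings n. \<Prod>k<n. max (g True (zs ! k)) (g False (zs ! k)))"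
    unfolding Pc_def
  proof (rule sum.cong[OF refl])
    fix zs assume zs: "zs \<in> strings n"
    have "(\<lambda>xs. P xs zs) ` strings n = (\<lambda>xs. \<Prod>k<n. g (xs ! k) (zs ! k)) ` strings n"
      by (rule image_cong) (simp_all add: P zs)
    then show "Max ((\<lambda>xs. P xs zs) ` strings n) = (\<Prod>k<n. max (g True (zs ! k)) (g False (zs ! k)))"
      using Max_strings_prod[of "\<lambda>k x. g x (zs ! k)"] g_nonneg by simp
  qed
  also have "\<dots> = Pc1 g ^ n"
    by (simp add: sum_strings_prod[of "\<lambda>k z. max (g True z) (g False z)"] Pc1_def)
  finally show ?thesis .
qed

lemma powr_inverse_power:
  fixes c :: real
  assumes "0 \<le> c" "n \<ge> 1"
  shows "(c ^ n) powr (1 / real n) = c"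
  using assms by (simp add: root_powr_inverse[symmetric] real_root_power_cancel)

definition PXZ1 :: "real \<Rightarrow> real \<Rightarrow> (bool \<Rightarrow> bool \<Rightarrow> real) \<Rightarrow> bool \<Rightarrow> bool \<Rightarrow> real" where
  "PXZ1 p \<alpha> W x z = PXY p \<alpha> x True * W True z + PXY p \<alpha> x False * W False z"

definition PYZ1 :: "real \<Rightarrow> real \<Rightarrow> (bool \<Rightarrow> bool \<Rightarrow> real) \<Rightarrow> bool \<Rightarrow> bool \<Rightarrow> real" where
  "PYZ1 p \<alpha> W y z = (PXY p \<alpha> True y + PXY p \<alpha> False y) * W y z"

lemma PXZn_eq_prod:
  assumes "xs \<in> strings n" "zs \<in> strings n"
  shows "PXZn p \<alpha> W n xs zs = (\<Prod>k<n. PXZ1 p \<alpha> W (xs ! k) (zs ! k))"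
proof -
  have "PXZn p \<alpha> W n xs zs = (\<Sum>ys\<in>strings n. \<Prod>k<n. PXY p \<alpha> (xs ! k) (ys ! k) * W (ys ! k) (zs ! k))"
    unfolding PXZn_def
    by (rule sum.cong) (use assms in \<open>simp_all add: PXYn_def Wn_def prod.distrib strings_def\<close>)
  then show ?thesis
    by (simp add: sum_strings_prod[of "\<lambda>k y. PXY p \<alpha> (xs ! k) y * W y (zs ! k)"] PXZ1_def)
qed

lemma PYZn_eq_prod:
  assumes "ys \<in> strings n" "zs \<in> strings n"
  shows "PYZn p \<alpha> W n ys zs = (\<Prod>k<n. PYZ1 p \<alpha> W (ys ! k) (zs ! k))"
proof -
  have "PYZn p \<alpha> W n ys zs = (\<Sum>xs\<in>strings n. \<Prod>k<n. PXY p \<alpha> (xs ! k) (ys ! k) * W (ys ! k) (zs ! k))"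
    unfolding PYZn_def
    by (rule sum.cong) (use assms in \<open>simp_all add: PXYn_def Wn_def prod.distrib strings_def\<close>)
  then show ?thesis
    by (simp add: sum_strings_prod[of "\<lambda>k x. PXY p \<alpha> x (ys ! k) * W (ys ! k) (zs ! k)"]
        PYZ1_def distrib_right)
qed

lemma PXY_nonneg: "0 \<le> p \<Longrightarrow> p \<le> 1 \<Longrightarrow> 0 \<le> \<alpha> \<Longrightarrow> \<alpha> \<le> 1 \<Longrightarrow> 0 \<le> PXY p \<alpha> x y"
  by (simp add: PXY_def bern_def)

lemma
  assumes "n \<ge> 1" "0 \<le> p" "p \<le> 1" "0 \<le> \<alpha>" "\<alpha> \<le> 1" "channel W"
  shows Pc_PXZn_root: "Pc n (PXZn p \<alpha> W n) powr (1 / real n) = Pc1 (PXZ1 p \<alpha> W)"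
    and Pc_PYZn_root: "Pc n (PYZn p \<alpha> W n) powr (1 / real n) = Pc1 (PYZ1 p \<alpha> W)"
proof -
  have W_nonneg: "0 \<le> W y z" for y z
    using \<open>channel W\<close> by (simp add: channel_def)
  have PXZ1_nonneg: "0 \<le> PXZ1 p \<alpha> W x z" for x z
    unfolding PXZ1_def using PXY_nonneg[OF assms(2-5)] W_nonneg by simp
  have PYZ1_nonneg: "0 \<le> PYZ1 p \<alpha> W y z" for y z
    unfolding PYZ1_def using PXY_nonneg[OF assms(2-5)] W_nonneg by simp
  have "Pc n (PXZn p \<alpha> W n) = Pc1 (PXZ1 p \<alpha> W) ^ n"
    by (rule Pc_product) (use PXZ1_nonneg PXZn_eq_prod in auto)
  then show "Pc n (PXZn p \<alpha> W n) powr (1 / real n) = Pc1 (PXZ1 p \<alpha> W)"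
    using powr_inverse_power Pc1_nonneg PXZ1_nonneg \<open>n \<ge> 1\<close> by simp
  have "Pc n (PYZn p \<alpha> W n) = Pc1 (PYZ1 p \<alpha> W) ^ n"
    by (rule Pc_product) (use PYZ1_nonneg PYZn_eq_prod in auto)
  then show "Pc n (PYZn p \<alpha> W n) powr (1 / real n) = Pc1 (PYZ1 p \<alpha> W)"
    using powr_inverse_power Pc1_nonneg PYZ1_nonneg \<open>n \<ge> 1\<close> by simp
qed

lemma hi_single_letter:
  assumes "n \<ge> 1" "0 \<le> p" "p \<le> 1" "0 \<le> \<alpha>" "\<alpha> \<le> 1"
  shows "hi n p \<alpha> \<epsilon> = Sup {Pc1 (PYZ1 p \<alpha> W) | W. channel W \<and> Pc1 (PXZ1 p \<alpha> W) \<le> \<epsilon>}"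
  unfolding hi_def using Pc_PXZn_root[OF assms] Pc_PYZn_root[OF assms]
  by (metis (no_types, opaque_lifting))

text \<open>The right-hand side does not depend on the guessing rule \<open>(g\<^sub>1, g\<^sub>0)\<close>: the
difference of the two sides is \<open>2\<alpha>(1-\<alpha>)(2p-1)\<close> times a probability.\<close>
lemma guessing_rule_bound:
  assumes W: "channel W" and "1/2 \<le> p" "0 \<le> \<alpha>" "\<alpha> \<le> 1"
    and q: "q = \<alpha> * (1 - p) + (1 - \<alpha>) * p"
  shows "q * (1 - \<alpha>) - (1 - (PYZ1 p \<alpha> W g\<^sub>1 True + PYZ1 p \<alpha> W g\<^sub>0 False)) * (p - \<alpha>)
      \<le> q * (PXZ1 p \<alpha> W g\<^sub>1 True + PXZ1 p \<alpha> W g\<^sub>0 False)"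
proof -
  define w\<^sub>1 where "w\<^sub>1 = W True True"
  define w\<^sub>0 where "w\<^sub>0 = W False True"
  have W_False: "W True False = 1 - w\<^sub>1" "W False False = 1 - w\<^sub>0"
    using W unfolding channel_def w\<^sub>1_def w\<^sub>0_def by (metis add_diff_cancel_left')+
  have w\<^sub>0: "0 \<le> w\<^sub>0" "w\<^sub>0 \<le> 1"
    using W W_False unfolding channel_def w\<^sub>0_def by (metis diff_ge_0_iff_ge)+
  define c where "c = 2 * \<alpha> * (1 - \<alpha>) * (2 * p - 1)"
  have "0 \<le> c" unfolding c_def using assms by simp
  define t where "t = (if g\<^sub>1 then (if g\<^sub>0 then 1 else w\<^sub>0) else (if g\<^sub>0 then 1 - w\<^sub>0 else 0))"
  have "0 \<le> t * c" using w\<^sub>0 \<open>0 \<le> c\<close> by (simp add: t_def)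
  have "q * (PXZ1 p \<alpha> W g\<^sub>1 True + PXZ1 p \<alpha> W g\<^sub>0 False)
      - (q * (1 - \<alpha>) - (1 - (PYZ1 p \<alpha> W g\<^sub>1 True + PYZ1 p \<alpha> W g\<^sub>0 False)) * (p - \<alpha>)) = t * c"
    unfolding q t_def c_def
    by (cases g\<^sub>1; cases g\<^sub>0;
        simp add: PXZ1_def PYZ1_def PXY_def bern_def W_False flip: w\<^sub>1_def w\<^sub>0_def; algebra)
  with \<open>0 \<le> t * c\<close> show ?thesis by linarith
qed

lemma Pc1_tradeoff:
  assumes W: "channel W" and "1/2 \<le> p" "p \<le> 1" "0 \<le> \<alpha>" "\<alpha> \<le> 1"
    and q: "q = \<alpha> * (1 - p) + (1 - \<alpha>) * p"
  shows "q * (1 - \<alpha>) - (1 - Pc1 (PYZ1 p \<alpha> W)) * (p - \<alpha>) \<le> q * Pc1 (PXZ1 p \<alpha> W)"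
proof -
  let ?g = "PYZ1 p \<alpha> W" and ?f = "PXZ1 p \<alpha> W"
  define g\<^sub>1 where "g\<^sub>1 = (?g False True \<le> ?g True True)"
  define g\<^sub>0 where "g\<^sub>0 = (?g False False \<le> ?g True False)"
  have "max (?g True z) (?g False z) = ?g (?g False z \<le> ?g True z) z" for z
    by (cases "?g False z = ?g True z") (auto simp: max_def)
  then have "Pc1 ?g = ?g g\<^sub>1 True + ?g g\<^sub>0 False"
    unfolding Pc1_def g\<^sub>1_def g\<^sub>0_def by metis
  moreover have "?f g\<^sub>1 True + ?f g\<^sub>0 False \<le> Pc1 ?f"
    unfolding Pc1_def by (intro add_mono) (cases g\<^sub>1; cases g\<^sub>0; simp)+
  moreover have "0 \<le> q" unfolding q using assms by simp
  ultimately have "q * (?f g\<^sub>1 True + ?f g\<^sub>0 False) \<le> q * Pc1 ?f"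
    by (simp add: mult_left_mono)
  then show ?thesis
    unfolding \<open>Pc1 ?g = _\<close>
    using guessing_rule_bound[OF assms(1,2,4,5) q, of g\<^sub>1 g\<^sub>0] by linarith
qed

lemma Pc1_PYZ1_le:
  assumes "channel W" and "1/2 \<le> p" "p \<le> 1" "0 \<le> \<alpha>" "\<alpha> < p"
    and "Pc1 (PXZ1 p \<alpha> W) \<le> \<epsilon>"
    and q: "q = \<alpha> * (1 - p) + (1 - \<alpha>) * p"
  shows "Pc1 (PYZ1 p \<alpha> W) \<le> 1 - (1 - \<alpha> - \<epsilon>) / (p - \<alpha>) * q"
proof -
  have "0 \<le> q" unfolding q using assms by simp
  then have "q * Pc1 (PXZ1 p \<alpha> W) \<le> q * \<epsilon>"
    using assms(6) by (simp add: mult_left_mono)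
  then have "q * (1 - \<alpha>) - (1 - Pc1 (PYZ1 p \<alpha> W)) * (p - \<alpha>) \<le> q * \<epsilon>"
    using Pc1_tradeoff[OF assms(1-4) _ q] assms(3,5) by linarith
  then have "(1 - \<alpha> - \<epsilon>) * q \<le> (1 - Pc1 (PYZ1 p \<alpha> W)) * (p - \<alpha>)"
    by (simp add: algebra_simps)
  with \<open>\<alpha> < p\<close> show ?thesis
    by (simp add: field_simps)
qed

definition zchannel :: "real \<Rightarrow> bool \<Rightarrow> bool \<Rightarrow> real" where
  "zchannel \<zeta> y z = (if y then (if z then 1 - \<zeta> else \<zeta>) else (if z then 0 else 1))"

lemma channel_zchannel: "0 \<le> \<zeta> \<Longrightarrow> \<zeta> \<le> 1 \<Longrightarrow> channel (zchannel \<zeta>)"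
  by (simp add: channel_def zchannel_def)

lemma Pc1_PXZ1_zchannel:
  assumes "\<alpha> \<le> p" "\<zeta> \<le> 1"
  shows "Pc1 (PXZ1 p \<alpha> (zchannel \<zeta>)) = max p (1 - \<alpha> - \<zeta> * (p - \<alpha>))"
proof -
  have "(1 - p) * \<alpha> * (1 - \<zeta>) \<le> p * (1 - \<alpha>) * (1 - \<zeta>)"
    using assms by (intro mult_right_mono) (auto simp: algebra_simps)
  then show ?thesis
    by (simp add: Pc1_def PXZ1_def zchannel_def PXY_def bern_def max_def algebra_simps)
qed

lemma Pc1_PYZ1_zchannel:
  assumes q: "q = \<alpha> * (1 - p) + (1 - \<alpha>) * p"
  shows "1 - \<zeta> * q \<le> Pc1 (PYZ1 p \<alpha> (zchannel \<zeta>))"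
proof -
  have "Pc1 (PYZ1 p \<alpha> (zchannel \<zeta>)) \<ge> PYZ1 p \<alpha> (zchannel \<zeta>) True True + PYZ1 p \<alpha> (zchannel \<zeta>) False False"
    unfolding Pc1_def by (intro add_mono) auto
  moreover have "PYZ1 p \<alpha> (zchannel \<zeta>) True True + PYZ1 p \<alpha> (zchannel \<zeta>) False False = 1 - \<zeta> * q"
    by (simp add: PYZ1_def zchannel_def PXY_def bern_def q algebra_simps)
  ultimately show ?thesis by simp
qed

theorem proposition2:
  fixes n :: nat and p \<alpha> \<epsilon> :: real
  assumes "n \<ge> 1"
    and "1/2 \<le> p" and "p < 1"
    and "0 \<le> \<alpha>" and "\<alpha> < 1/2" and "1 - \<alpha> > p"
    and "p \<le> \<epsilon>" and "\<epsilon> \<le> 1 - \<alpha>"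
  shows "hi n p \<alpha> \<epsilon> =
    1 - ((1 - \<alpha>) * (1 - p) + (1 - \<alpha>) * p - \<epsilon>) / ((1 - \<alpha>) * p - \<alpha> * (1 - p))
        * (\<alpha> * (1 - p) + (1 - \<alpha>) * p)"
proof -
  define q where "q = \<alpha> * (1 - p) + (1 - \<alpha>) * p"
  define \<zeta> where "\<zeta> = (1 - \<alpha> - \<epsilon>) / (p - \<alpha>)"
  define S where "S = {Pc1 (PYZ1 p \<alpha> W) | W. channel W \<and> Pc1 (PXZ1 p \<alpha> W) \<le> \<epsilon>}"
  have "\<alpha> < p" using assms by linarith
  have \<zeta>: "0 \<le> \<zeta>" "\<zeta> \<le> 1" "\<zeta> * (p - \<alpha>) = 1 - \<alpha> - \<epsilon>"
    using assms \<open>\<alpha> < p\<close> by (auto simp: \<zeta>_def divide_le_eq_1)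
  have "Pc1 (PXZ1 p \<alpha> (zchannel \<zeta>)) \<le> \<epsilon>"
    using Pc1_PXZ1_zchannel[of \<alpha> p \<zeta>] \<zeta> assms by simp
  then have "Pc1 (PYZ1 p \<alpha> (zchannel \<zeta>)) \<in> S"
    unfolding S_def using channel_zchannel[OF \<zeta>(1,2)] by blast
  moreover have upper: "x \<le> 1 - \<zeta> * q" if "x \<in> S" for x
    using that Pc1_PYZ1_le[of _ p \<alpha> \<epsilon> q] assms \<open>\<alpha> < p\<close>
    by (auto simp: S_def q_def \<zeta>_def)
  ultimately have "Pc1 (PYZ1 p \<alpha> (zchannel \<zeta>)) = 1 - \<zeta> * q"
    using Pc1_PYZ1_zchannel[OF q_def, of \<zeta>] by fastforce
  with \<open>Pc1 (PYZ1 p \<alpha> (zchannel \<zeta>)) \<in> S\<close> upper have "Sup S = 1 - \<zeta> * q"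
    by (intro cSup_eq_maximum) auto
  moreover have "hi n p \<alpha> \<epsilon> = Sup S"
    unfolding S_def by (rule hi_single_letter) (use assms in auto)
  ultimately show ?thesis
    by (simp add: q_def \<zeta>_def algebra_simps)
qed

end
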